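(* Let $\mathcal{C}$ be a binary $[n,n/2]$ even formally self-dual code, and let $f_{\mathcal{C}}(t)=W_{\mathcal{C}}(\sqrt{1+t},\sqrt{1-t})$ for $0<t<1$. Then $$f_{\mathcal{C}}(t)=2^{n/2}\sum_{r=0}^{\lfloor n/8\rfloor}a_r\,(t^4-t^2+1)^r,$$ where $a_r\in\mathbb{Q}$ and $\sum_{r=0}^{\lfloor n/8\rfloor}a_r=1$.
   Context: For a binary linear code $\mathcal{C}\subseteq\mathbb{F}_2^n$, $W_{\mathcal{C}}(x,y)=\sum_{w=0}^n A_w x^{n-w}y^w$ with $A_w$ the number of codewords of Hamming weight $w$. $\mathcal{C}$ is formally self-dual if $W_{\mathcal{C}}=W_{\mathcal{C}^\perp}$, and even if all codewords have even Hamming weight. *)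

theory Defs
  imports Complex_Main
begin

text \<open>Vectors of F_2^n are boolean lists of length n (True = 1).\<close>

definition vecs :: "nat \<Rightarrow> bool list set" where
  "vecs n = {v. length v = n}"

definition vadd :: "bool list \<Rightarrow> bool list \<Rightarrow> bool list" where
  "vadd u v = map2 (\<noteq>) u v"

definition zero_vec :: "nat \<Rightarrow> bool list" where
  "zero_vec n = replicate n False"

definition hweight :: "bool list \<Rightarrow> nat" where
  "hweight v = length (filter id v)"

text \<open>Standard inner product over F_2 is zero iff this count is even.\<close>
definition ip_count :: "bool list \<Rightarrow> bool list \<Rightarrow> nat" where
  "ip_count u v = length (filter id (map2 (\<and>) u v))"

text \<open>Binary linear code of length n (over F_2, a subspace = nonempty subset closed under addition).\<close>
definition linear_code :: "nat \<Rightarrow> bool list set \<Rightarrow> bool" where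
  "linear_code n C \<longleftrightarrow> C \<subseteq> vecs n \<and> zero_vec n \<in> C \<and> (\<forall>u\<in>C. \<forall>v\<in>C. vadd u v \<in> C)"

definition dual_code :: "nat \<Rightarrow> bool list set \<Rightarrow> bool list set" where
  "dual_code n C = {v \<in> vecs n. \<forall>c\<in>C. even (ip_count v c)}"

definition weight_count :: "bool list set \<Rightarrow> nat \<Rightarrow> nat" where
  "weight_count C w = card {c \<in> C. hweight c = w}"

definition weight_enum :: "nat \<Rightarrow> bool list set \<Rightarrow> real \<Rightarrow> real \<Rightarrow> real" where
  "weight_enum n C x y = (\<Sum>c\<in>C. x ^ (n - hweight c) * y ^ (hweight c))"

text \<open>Formally self-dual: W_C = W_{C^perp} as polynomials, i.e. equal coefficients A_w.\<close>
definition formally_self_dual :: "nat \<Rightarrow> bool list set \<Rightarrow> bool" where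
  "formally_self_dual n C \<longleftrightarrow> (\<forall>w. weight_count C w = weight_count (dual_code n C) w)"

definition even_code :: "bool list set \<Rightarrow> bool" where
  "even_code C \<longleftrightarrow> (\<forall>c\<in>C. even (hweight c))"

end

theory Submission
  imports Defs "HOL-Computational_Algebra.Polynomial"
begin

(* Since n and all weights are even, f(t) = W(sqrt(1+t), sqrt(1-t)) is a polynomial P(t) with
   rational coefficients and degree at most n/2.  For a formally self-dual code the MacWilliams
   identity reads 2^(n/2) W(x,y) = W(x+y, x-y); combined with W(x,-y) = W(x,y) it makes W
   symmetric, so P is even: P(t) = Q(t^2).  Applied at (sqrt(1+t), sqrt(1-t)) and combined with
   homogeneity, it gives f(t) = f(sqrt(1-t^2)), i.e. Q(v) = Q(1-v).  A polynomial invariant under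
   v \<mapsto> 1-v is a polynomial in (v - 1/2)^2, hence in v^2 - v + 1 = t^4 - t^2 + 1, of degree at
   most n/8.  Finally P(0) = |C| = 2^(n/2) normalises the coefficients to sum 1. *)

lemma hweight_Nil [simp]: "hweight [] = 0"
  by (simp add: hweight_def)

lemma hweight_Cons [simp]: "hweight (b # v) = (if b then 1 else 0) + hweight v"
  by (simp add: hweight_def)

lemma hweight_le_length: "hweight v \<le> length v"
  by (simp add: hweight_def)

lemma ip_count_Nil [simp]: "ip_count [] v = 0" "ip_count u [] = 0"
  by (simp_all add: ip_count_def)

lemma ip_count_Cons [simp]:
  "ip_count (a # u) (b # v) = (if a \<and> b then 1 else 0) + ip_count u v"
  by (simp add: ip_count_def)

lemma vadd_Nil [simp]: "vadd [] v = []"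
  by (simp add: vadd_def)

lemma vadd_Cons [simp]: "vadd (a # u) (b # v) = (a \<noteq> b) # vadd u v"
  by (simp add: vadd_def)

lemma vadd_cancel_left: "length a = length b \<Longrightarrow> vadd a (vadd a b) = b"
  by (induction a arbitrary: b) (auto simp: Suc_length_conv)

lemma even_ip_count_vadd:
  "length u = length a \<Longrightarrow> length u = length b \<Longrightarrow>
   even (ip_count u (vadd a b)) \<longleftrightarrow> (even (ip_count u a) \<longleftrightarrow> even (ip_count u b))"
proof (induction u arbitrary: a b)
  case (Cons x u)
  then obtain a0 a' b0 b' where "a = a0 # a'" "b = b0 # b'"
    by (metis length_Suc_conv)
  with Cons show ?case by auto
qed simp

lemma finite_vecs: "finite (vecs n)"
  using finite_lists_length_eq[of "UNIV :: bool set" n] by (simp add: vecs_def)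

lemma vecs_Suc: "vecs (Suc n) = Cons True ` vecs n \<union> Cons False ` vecs n"
  by (auto simp: vecs_def length_Suc_conv image_iff)

lemma sum_vecs_Suc:
  "(\<Sum>v\<in>vecs (Suc n). f v) = (\<Sum>v\<in>vecs n. f (True # v)) + (\<Sum>v\<in>vecs n. f (False # v))"
  unfolding vecs_Suc
  by (subst sum.union_disjoint) (auto simp: finite_vecs sum.reindex)

lemma linear_code_subset_vecs: "linear_code n C \<Longrightarrow> C \<subseteq> vecs n"
  by (simp add: linear_code_def)

lemma finite_linear_code: "linear_code n C \<Longrightarrow> finite C"
  using finite_subset[OF linear_code_subset_vecs finite_vecs] .

definition chi :: "bool list \<Rightarrow> bool list \<Rightarrow> real" where
  "chi v c = (-1) ^ ip_count v c"

lemma sum_chi_linear_code: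
  assumes C: "linear_code n C" and v: "v \<in> vecs n"
  shows "(\<Sum>c\<in>C. chi v c) = (if v \<in> dual_code n C then real (card C) else 0)"
proof (cases "v \<in> dual_code n C")
  case True
  then show ?thesis by (simp add: dual_code_def chi_def)
next
  case False
  then obtain c0 where c0: "c0 \<in> C" "odd (ip_count v c0)"
    using v by (auto simp: dual_code_def)
  have len: "length c = n" if "c \<in> C" for c
    using that linear_code_subset_vecs[OF C] by (auto simp: vecs_def)
  have closed: "vadd c0 c \<in> C" if "c \<in> C" for c
    using that c0 C by (simp add: linear_code_def)
  \<comment> \<open>Translation by a codeword not orthogonal to v flips the sign of every character value.\<close>
  have "(\<Sum>c\<in>C. chi v c) = (\<Sum>c\<in>C. chi v (vadd c0 c))"
    by (rule sum.reindex_bij_witness[of _ "vadd c0" "vadd c0"])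
       (simp_all add: closed vadd_cancel_left len c0)
  also have "\<dots> = (\<Sum>c\<in>C. - chi v c)"
    using v c0 even_ip_count_vadd[of v c0] len
    by (intro sum.cong refl) (simp add: chi_def vecs_def minus_one_power_iff)
  finally show ?thesis using False by (simp add: sum_negf)
qed

lemma sum_vecs_chi_weight:
  fixes x y :: real
  shows "(\<Sum>v\<in>vecs (length c). chi v c * (x ^ (length c - hweight v) * y ^ hweight v))
       = (x + y) ^ (length c - hweight c) * (x - y) ^ hweight c"
proof (induction c)
  case Nil
  show ?case by (simp add: vecs_def chi_def)
next
  case (Cons b c)
  let ?S = "\<Sum>v\<in>vecs (length c). chi v c * (x ^ (length c - hweight v) * y ^ hweight v)"
  have diff: "Suc (length c) - hweight v = Suc (length c - hweight v)" if "v \<in> vecs (length c)" for v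
    using that hweight_le_length[of v] by (simp add: vecs_def)
  have "(\<Sum>v\<in>vecs (length (b # c)). chi v (b # c) *
          (x ^ (length (b # c) - hweight v) * y ^ hweight v))
      = (if b then - y else y) * ?S + x * ?S"
    by (simp add: sum_vecs_Suc sum_distrib_left diff chi_def mult_ac)
  also have "\<dots> = (x + y) ^ (length (b # c) - hweight (b # c)) * (x - y) ^ hweight (b # c)"
    unfolding Cons.IH using hweight_le_length[of c]
    by (cases b) (simp_all add: Suc_diff_le algebra_simps)
  finally show ?case .
qed

theorem macwilliams_identity:
  fixes x y :: real
  assumes C: "linear_code n C"
  shows "real (card C) * weight_enum n (dual_code n C) x y = weight_enum n C (x + y) (x - y)"
proof -
  have len: "length c = n" if "c \<in> C" for c
    using that linear_code_subset_vecs[OF C] by (auto simp: vecs_def)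
  define T where "T v = x ^ (n - hweight v) * y ^ hweight v" for v
  have "real (card C) * weight_enum n (dual_code n C) x y
      = (\<Sum>v\<in>vecs n. if v \<in> dual_code n C then real (card C) * T v else 0)"
    by (simp add: weight_enum_def T_def sum_distrib_left sum.If_cases finite_vecs Int_absorb1)
       (auto simp: dual_code_def intro!: sum.cong)
  also have "\<dots> = (\<Sum>v\<in>vecs n. (\<Sum>c\<in>C. chi v c) * T v)"
    by (intro sum.cong refl) (simp add: sum_chi_linear_code[OF C])
  also have "\<dots> = (\<Sum>c\<in>C. \<Sum>v\<in>vecs n. chi v c * T v)"
    by (simp add: sum_distrib_right sum.swap[of _ C])
  also have "\<dots> = (\<Sum>c\<in>C. (x + y) ^ (n - hweight c) * (x - y) ^ hweight c)"
  proof (rule sum.cong[OF refl])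
    fix c assume "c \<in> C"
    then show "(\<Sum>v\<in>vecs n. chi v c * T v) = (x + y) ^ (n - hweight c) * (x - y) ^ hweight c"
      using sum_vecs_chi_weight[of c x y] len by (simp add: T_def)
  qed
  finally show ?thesis by (simp add: weight_enum_def)
qed

lemma weight_enum_weight_count:
  fixes x y :: real
  assumes "D \<subseteq> vecs n"
  shows "weight_enum n D x y = (\<Sum>w\<le>n. real (weight_count D w) * (x ^ (n - w) * y ^ w))"
proof -
  have fin: "finite D"
    using assms finite_vecs finite_subset by blast
  have le: "hweight c \<le> n" if "c \<in> D" for c
    using that assms hweight_le_length[of c] by (auto simp: vecs_def)
  have "weight_enum n D x y
      = (\<Sum>w\<le>n. \<Sum>c\<in>{c \<in> D. hweight c = w}. x ^ (n - hweight c) * y ^ hweight c)"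
    unfolding weight_enum_def by (rule sum.group[symmetric]) (use fin le in auto)
  also have "\<dots> = (\<Sum>w\<le>n. \<Sum>c\<in>{c \<in> D. hweight c = w}. x ^ (n - w) * y ^ w)"
    by (intro sum.cong) auto
  also have "\<dots> = (\<Sum>w\<le>n. real (weight_count D w) * (x ^ (n - w) * y ^ w))"
    by (simp add: weight_count_def)
  finally show ?thesis .
qed

lemma weight_enum_dual_eq:
  fixes x y :: real
  assumes "linear_code n C" and "formally_self_dual n C"
  shows "weight_enum n (dual_code n C) x y = weight_enum n C x y"
proof -
  have "dual_code n C \<subseteq> vecs n"
    by (auto simp: dual_code_def)
  with assms show ?thesis
    by (simp add: weight_enum_weight_count linear_code_subset_vecs formally_self_dual_def)
qed

lemma macwilliams_formally_self_dual:
  fixes x y :: real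
  assumes "linear_code n C" and "formally_self_dual n C"
  shows "real (card C) * weight_enum n C x y = weight_enum n C (x + y) (x - y)"
  using macwilliams_identity[OF assms(1)] weight_enum_dual_eq[OF assms] by simp

lemma weight_enum_homogeneous:
  fixes c x y :: real
  assumes "C \<subseteq> vecs n"
  shows "weight_enum n C (c * x) (c * y) = c ^ n * weight_enum n C x y"
  unfolding weight_enum_def sum_distrib_left
proof (rule sum.cong[OF refl])
  fix v assume "v \<in> C"
  then have "hweight v \<le> n"
    using assms hweight_le_length[of v] by (auto simp: vecs_def)
  then show "(c * x) ^ (n - hweight v) * (c * y) ^ hweight v
      = c ^ n * (x ^ (n - hweight v) * y ^ hweight v)"
    by (simp add: power_mult_distrib mult_ac flip: power_add)
qed

lemma weight_enum_uminus_right: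
  fixes x y :: real
  assumes "even_code C"
  shows "weight_enum n C x (- y) = weight_enum n C x y"
  using assms by (simp add: weight_enum_def even_code_def)

lemma weight_enum_commute:
  fixes x y :: real
  assumes C: "linear_code n C" and "even_code C" and fsd: "formally_self_dual n C"
  shows "weight_enum n C y x = weight_enum n C x y"
proof -
  have "zero_vec n \<in> C"
    using C by (simp add: linear_code_def)
  then have "card C \<noteq> 0"
    using finite_linear_code[OF C] by auto
  moreover have "real (card C) * weight_enum n C y x = real (card C) * weight_enum n C x y"
    using macwilliams_formally_self_dual[OF C fsd, of y x]
      macwilliams_formally_self_dual[OF C fsd, of x y]
      weight_enum_uminus_right[OF \<open>even_code C\<close>, of n "x + y" "x - y"]
    by (simp add: add.commute)
  ultimately show ?thesis by simp
qed

lemma weight_enum_sqrt_circle: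
  fixes t :: real
  assumes C: "linear_code n C" and fsd: "formally_self_dual n C"
    and "even n" and card: "card C = 2 ^ (n div 2)"
    and t: "0 \<le> t" "t \<le> 1"
  defines "s \<equiv> sqrt (1 - t\<^sup>2)"
  shows "weight_enum n C (sqrt (1 + t)) (sqrt (1 - t))
       = weight_enum n C (sqrt (1 + s)) (sqrt (1 - s))"
proof -
  define x y where "x = sqrt (1 + t)" and "y = sqrt (1 - t)"
  have xy: "x * y = s" "x\<^sup>2 = 1 + t" "y\<^sup>2 = 1 - t"
    using t by (simp_all add: x_def y_def s_def power2_eq_square algebra_simps flip: real_sqrt_mult)
  \<comment> \<open>The MacWilliams transform maps the point for t to the point for s, up to the factor sqrt 2.\<close>
  have "(x + y)\<^sup>2 = 2 * (1 + s)" "(x - y)\<^sup>2 = 2 * (1 - s)"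
    using xy by (simp_all add: power2_sum power2_diff)
  moreover have "0 \<le> x + y" "0 \<le> x - y"
    using t by (simp_all add: x_def y_def)
  ultimately have sum_diff: "x + y = sqrt 2 * sqrt (1 + s)" "x - y = sqrt 2 * sqrt (1 - s)"
    by (metis real_sqrt_unique real_sqrt_mult)+
  have "sqrt 2 ^ n = (2::real) ^ (n div 2)"
    using \<open>even n\<close> by (metis dvd_mult_div_cancel power_mult real_sqrt_pow2 zero_le_numeral)
  then have "2 ^ (n div 2) * weight_enum n C x y
      = 2 ^ (n div 2) * weight_enum n C (sqrt (1 + s)) (sqrt (1 - s))"
    using macwilliams_formally_self_dual[OF C fsd, of x y] card
      weight_enum_homogeneous[OF linear_code_subset_vecs[OF C]]
    by (simp add: sum_diff)
  then show ?thesis by (simp add: x_def y_def)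
qed

lemma pcompose_square_decomp:
  fixes p :: "'a::comm_semiring_1 poly"
  shows "\<exists>e d. p = e \<circ>\<^sub>p [:0, 0, 1:] + [:0, 1:] * (d \<circ>\<^sub>p [:0, 0, 1:])"
proof (induction p)
  case 0
  show ?case by (rule exI[of _ 0], rule exI[of _ 0]) simp
next
  case (pCons a p)
  then obtain e d where p: "p = e \<circ>\<^sub>p [:0, 0, 1:] + [:0, 1:] * (d \<circ>\<^sub>p [:0, 0, 1:])"
    by blast
  have "pCons a p = pCons a d \<circ>\<^sub>p [:0, 0, 1:] + [:0, 1:] * (e \<circ>\<^sub>p [:0, 0, 1:])"
    by (simp add: p pcompose_pCons poly_eq_iff coeff_pCons add.commute split: nat.split)
  then show ?case by blast
qed

lemma even_poly_eq_pcompose_square: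
  fixes p :: "'a::{idom, ring_char_0} poly"
  assumes "p \<circ>\<^sub>p [:0, -1:] = p"
  shows "\<exists>q. p = q \<circ>\<^sub>p [:0, 0, 1:]"
proof -
  obtain e d where p: "p = e \<circ>\<^sub>p [:0, 0, 1:] + [:0, 1:] * (d \<circ>\<^sub>p [:0, 0, 1:])"
    using pcompose_square_decomp by blast
  have "[:0, 0, 1:] \<circ>\<^sub>p [:0, -1:] = ([:0, 0, 1:] :: 'a poly)"
    by (simp add: pcompose_pCons)
  then have "p \<circ>\<^sub>p [:0, -1:] = e \<circ>\<^sub>p [:0, 0, 1:] - [:0, 1:] * (d \<circ>\<^sub>p [:0, 0, 1:])"
    by (simp add: p pcompose_add pcompose_mult pcompose_pCons flip: pcompose_assoc)
  with assms p have "smult 2 ([:0, 1:] * (d \<circ>\<^sub>p [:0, 0, 1:])) = 0"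
    by (simp add: algebra_simps numeral_mult_conv_smult flip: mult_2)
  then have "d = 0"
    using pcompose_eq_0 by force
  with p show ?thesis by auto
qed

lemma reflection_symmetric_poly_eq_pcompose:
  fixes q :: "'a::field_char_0 poly"
  assumes "q \<circ>\<^sub>p [:1, -1:] = q"
  shows "\<exists>r. q = r \<circ>\<^sub>p [:1, -1, 1:]"
proof -
  define s where "s = q \<circ>\<^sub>p [:1/2, 1:]"
  have "s \<circ>\<^sub>p [:0, -1:] = (q \<circ>\<^sub>p [:1, -1:]) \<circ>\<^sub>p [:1/2, 1:]"
    by (simp add: s_def pcompose_pCons flip: pcompose_assoc)
  then obtain u where u: "s = u \<circ>\<^sub>p [:0, 0, 1:]"
    using even_poly_eq_pcompose_square assms s_def by metis
  have "q = s \<circ>\<^sub>p [:-1/2, 1:]"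
    by (simp add: s_def pcompose_pCons flip: pcompose_assoc)
  also have "\<dots> = u \<circ>\<^sub>p ([:0, 0, 1:] \<circ>\<^sub>p [:-1/2, 1:])"
    by (simp add: u pcompose_assoc)
  also have "\<dots> = (u \<circ>\<^sub>p [:-3/4, 1:]) \<circ>\<^sub>p [:1, -1, 1:]"
    by (simp add: pcompose_pCons flip: pcompose_assoc)
  finally show ?thesis by blast
qed

lemma poly_eq_sum_atMost:
  fixes x :: "'a::{comm_semiring_0, semiring_1}"
  assumes "degree p \<le> d"
  shows "poly p x = (\<Sum>i\<le>d. coeff p i * x ^ i)"
proof -
  have "poly p x = (\<Sum>i\<le>degree p. coeff p i * x ^ i)"
    by (rule poly_altdef)
  also have "\<dots> = (\<Sum>i\<le>d. coeff p i * x ^ i)"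
    using assms by (intro sum.mono_neutral_left) (auto simp: coeff_eq_0)
  finally show ?thesis .
qed

abbreviation of_rat_poly :: "rat poly \<Rightarrow> 'a::field_char_0 poly" where
  "of_rat_poly \<equiv> map_poly of_rat"

lemma of_rat_poly_add: "of_rat_poly (p + q) = of_rat_poly p + of_rat_poly q"
  by (rule poly_eqI) (simp add: coeff_map_poly of_rat_add)

lemma of_rat_poly_mult: "of_rat_poly (p * q) = of_rat_poly p * of_rat_poly q"
  by (induction p) (simp_all add: map_poly_pCons map_poly_smult of_rat_poly_add of_rat_mult)

lemma of_rat_poly_power: "of_rat_poly (p ^ k) = of_rat_poly p ^ k"
  by (induction k) (simp_all add: of_rat_poly_mult)

lemma of_rat_poly_sum: "of_rat_poly (\<Sum>i\<in>A. f i) = (\<Sum>i\<in>A. of_rat_poly (f i))"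
  by (induction A rule: infinite_finite_induct) (simp_all add: of_rat_poly_add)

lemma of_rat_poly_pcompose: "of_rat_poly (p \<circ>\<^sub>p q) = of_rat_poly p \<circ>\<^sub>p of_rat_poly q"
  by (induction p) (simp_all add: pcompose_pCons map_poly_pCons of_rat_poly_add of_rat_poly_mult)

lemma of_rat_poly_eq_on_interval:
  fixes p q :: "rat poly" and a b :: "'a::{field_char_0, linordered_field}"
  assumes "a < b" and "\<And>x. a \<le> x \<Longrightarrow> x \<le> b \<Longrightarrow> poly (of_rat_poly p) x = poly (of_rat_poly q) x"
  shows "p = q"
proof -
  have "of_rat_poly (p - q) = (of_rat_poly p - of_rat_poly q :: 'a poly)"
    by (rule poly_eqI) (simp add: coeff_map_poly of_rat_diff)
  then have "{a..b} \<subseteq> {x. poly (of_rat_poly (p - q) :: 'a poly) x = 0}"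
    using assms(2) by auto
  then have "of_rat_poly (p - q) = (0 :: 'a poly)"
    using assms(1) poly_roots_finite infinite_Icc finite_subset by metis
  then show ?thesis
    by (simp add: map_poly_eq_0_iff)
qed

definition enum_poly :: "nat \<Rightarrow> bool list set \<Rightarrow> rat poly" where
  "enum_poly n C = (\<Sum>c\<in>C. [:1, 1:] ^ ((n - hweight c) div 2) * [:1, -1:] ^ (hweight c div 2))"

lemma poly_enum_poly:
  fixes t :: real
  assumes "even n" and "even_code C" and "-1 \<le> t" "t \<le> 1"
  shows "poly (of_rat_poly (enum_poly n C)) t = weight_enum n C (sqrt (1 + t)) (sqrt (1 - t))"
  unfolding enum_poly_def weight_enum_def of_rat_poly_sum poly_sum
proof (rule sum.cong[OF refl])
  fix c assume "c \<in> C"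
  then have "even (hweight c)"
    using assms(2) by (simp add: even_code_def)
  moreover from this have "even (n - hweight c)"
    using assms(1) by simp
  ultimately obtain k w where "n - hweight c = 2 * k" "hweight c = 2 * w"
    by (elim evenE)
  then show "poly (of_rat_poly ([:1, 1:] ^ ((n - hweight c) div 2) * [:1, -1:] ^ (hweight c div 2))) t
      = sqrt (1 + t) ^ (n - hweight c) * sqrt (1 - t) ^ hweight c"
    using assms by (simp add: of_rat_poly_mult of_rat_poly_power map_poly_pCons power_mult)
qed

lemma degree_enum_poly:
  assumes "C \<subseteq> vecs n"
  shows "degree (enum_poly n C) \<le> n div 2"
  unfolding enum_poly_def
proof (rule degree_sum_le)
  fix c assume "c \<in> C"
  let ?a = "(n - hweight c) div 2" and ?b = "hweight c div 2"
  have "degree ([:1::rat, 1:] ^ ?a * [:1, -1:] ^ ?b)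
      \<le> degree ([:1::rat, 1:] ^ ?a) + degree ([:1::rat, -1:] ^ ?b)"
    by (rule degree_mult_le)
  also have "\<dots> \<le> ?a + ?b"
    using degree_power_le[of "[:1::rat, 1:]" ?a] degree_power_le[of "[:1::rat, -1:]" ?b]
    by simp
  also have "\<dots> \<le> n div 2"
    using \<open>c \<in> C\<close> assms hweight_le_length[of c] by (auto simp: vecs_def)
  finally show "degree ([:1::rat, 1:] ^ ?a * [:1, -1:] ^ ?b) \<le> n div 2" .
qed (rule finite_subset[OF assms finite_vecs])

lemma poly_enum_poly_0: "poly (enum_poly n C) 0 = of_nat (card C)"
  by (simp add: enum_poly_def poly_sum)

lemma enum_poly_eq_pcompose_quartic:
  assumes C: "linear_code n C" and "even n" and card: "card C = 2 ^ (n div 2)"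
    and "even_code C" and fsd: "formally_self_dual n C"
  shows "\<exists>r. enum_poly n C = r \<circ>\<^sub>p [:1, 0, -1, 0, 1:]"
proof -
  let ?P = "enum_poly n C"
  let ?f = "\<lambda>t. weight_enum n C (sqrt (1 + t)) (sqrt (1 - t))"
  have P: "poly (of_rat_poly ?P) t = ?f t" if "-1 \<le> t" "t \<le> 1" for t :: real
    using poly_enum_poly[OF \<open>even n\<close> \<open>even_code C\<close> that] .
  have "?P \<circ>\<^sub>p [:0, -1:] = ?P"
  proof (rule of_rat_poly_eq_on_interval[of "-1 :: real" 1])
    fix t :: real assume "-1 \<le> t" "t \<le> 1"
    then show "poly (of_rat_poly (?P \<circ>\<^sub>p [:0, -1:])) t = poly (of_rat_poly ?P) t"
      using weight_enum_commute[OF C \<open>even_code C\<close> fsd]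
      by (simp add: of_rat_poly_pcompose map_poly_pCons poly_pcompose P)
  qed simp
  then obtain Q where Q: "?P = Q \<circ>\<^sub>p [:0, 0, 1:]"
    using even_poly_eq_pcompose_square by blast
  have Q_sqrt: "poly (of_rat_poly Q) v = ?f (sqrt v)" if "0 \<le> v" "v \<le> 1" for v :: real
  proof -
    have "0 \<le> sqrt v" "sqrt v \<le> 1"
      using that by simp_all
    then have "poly (of_rat_poly ?P) (sqrt v) = ?f (sqrt v)"
      by (intro P) linarith+
    with that show ?thesis
      by (simp add: Q of_rat_poly_pcompose map_poly_pCons poly_pcompose flip: power2_eq_square)
  qed
  have "Q \<circ>\<^sub>p [:1, -1:] = Q"
  proof (rule of_rat_poly_eq_on_interval[of "0 :: real" 1])
    fix v :: real assume v: "0 \<le> v" "v \<le> 1"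
    then have "?f (sqrt v) = ?f (sqrt (1 - v))"
      using weight_enum_sqrt_circle[OF C fsd \<open>even n\<close> card, of "sqrt v"] by simp
    with v show "poly (of_rat_poly (Q \<circ>\<^sub>p [:1, -1:])) v = poly (of_rat_poly Q) v"
      by (simp add: of_rat_poly_pcompose map_poly_pCons poly_pcompose Q_sqrt)
  qed simp
  then obtain r where "Q = r \<circ>\<^sub>p [:1, -1, 1:]"
    using reflection_symmetric_poly_eq_pcompose by blast
  then have "?P = r \<circ>\<^sub>p ([:1, -1, 1:] \<circ>\<^sub>p [:0, 0, 1:])"
    by (simp add: Q pcompose_assoc)
  also have "[:1, -1, 1:] \<circ>\<^sub>p [:0, 0, 1:] = ([:1, 0, -1, 0, 1:] :: rat poly)"
    by (simp add: pcompose_pCons)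
  finally show ?thesis by blast
qed

theorem lemma5:
  fixes n :: nat and C :: "bool list set"
  assumes "linear_code n C"
    and "even n"
    and "card C = 2 ^ (n div 2)"
    and "even_code C"
    and "formally_self_dual n C"
  shows "\<exists>a :: nat \<Rightarrow> rat. (\<Sum>r\<le>n div 8. a r) = 1 \<and>
           (\<forall>t::real. 0 < t \<and> t < 1 \<longrightarrow>
              weight_enum n C (sqrt (1 + t)) (sqrt (1 - t))
                = 2 ^ (n div 2) * (\<Sum>r\<le>n div 8. of_rat (a r) * (t^4 - t^2 + 1) ^ r))"
proof -
  obtain u where u: "enum_poly n C = u \<circ>\<^sub>p [:1, 0, -1, 0, 1:]"
    using enum_poly_eq_pcompose_quartic[OF assms] by blast
  have "degree u * 4 \<le> n div 2"
    using degree_enum_poly[OF linear_code_subset_vecs[OF assms(1)]]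
    by (simp add: u degree_pcompose)
  then have deg: "degree u \<le> n div 8"
    by linarith
  define a where "a i = coeff u i / 2 ^ (n div 2)" for i
  have "poly u 1 = 2 ^ (n div 2)"
    using poly_enum_poly_0[of n C] assms(3) by (simp add: u poly_pcompose)
  then have "(\<Sum>i\<le>n div 8. a i) = 1"
    by (simp add: a_def poly_eq_sum_atMost[OF deg] flip: sum_divide_distrib)
  moreover have "weight_enum n C (sqrt (1 + t)) (sqrt (1 - t))
      = 2 ^ (n div 2) * (\<Sum>i\<le>n div 8. of_rat (a i) * (t^4 - t^2 + 1) ^ i)"
    if "0 < t" "t < 1" for t :: real
  proof -
    have "weight_enum n C (sqrt (1 + t)) (sqrt (1 - t)) = poly (of_rat_poly u) (t^4 - t^2 + 1)"
      using poly_enum_poly[OF assms(2,4), of t] that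
      by (simp add: u of_rat_poly_pcompose map_poly_pCons poly_pcompose algebra_simps
          power4_eq_xxxx power2_eq_square)
    also have "\<dots> = (\<Sum>i\<le>n div 8. of_rat (coeff u i) * (t^4 - t^2 + 1) ^ i)"
      using deg by (simp add: poly_eq_sum_atMost degree_map_poly coeff_map_poly)
    finally show ?thesis
      by (simp add: a_def sum_distrib_left of_rat_divide of_rat_power)
  qed
  ultimately show ?thesis by blast
qed

end
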